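(* For every positive integer $d$, there exist infinitely many monic rigid Carmichael polynomials of order $d$ in $\mathbb{F}_q[t]$.
   Context: $\mathbb{F}_q$ is the finite field with $q$ elements. For an integer $d\ge1$, a rigid Carmichael polynomial of order $d$ in $\mathbb{F}_q[t]$ is a reducible square-free polynomial $g\in\mathbb{F}_q[t]$ such that $i\cdot\deg P$ divides $d\cdot\deg g$ for every irreducible polynomial $P$ dividing $g$ and every $i=1,\dots,d$. *)

theory Defs
  imports "HOL-Computational_Algebra.Computational_Algebra"
begin

definition rigid_carmichael :: "nat \<Rightarrow> 'a::field poly \<Rightarrow> bool" where
  "rigid_carmichael d g \<longleftrightarrow>
     g \<noteq> 0 \<and> \<not> is_unit g \<and> \<not> irreducible g \<and> squarefree g \<and>
     (\<forall>P. irreducible P \<and> P dvd g \<longrightarrow>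
        (\<forall>i\<in>{1..d}. i * degree P dvd d * degree g))"

end

theory Submission
  imports
    Defs
    "HOL-Algebra.Algebraic_Closure_Type"
    "HOL-Algebra.Sylow"
    "HOL-Algebra.Multiplicative_Group"
    "HOL-Library.Cardinality"
begin

text \<open>
  Fix a large prime l. In an algebraic closure of F_q the Frobenius map y \<mapsto> y^q permutes
  the q^l - q elements of F_{q^l} outside F_q, and because l is prime all its orbits there have
  exactly l elements. For a union T of L such orbits, the product of the t - y over y in T has
  Frobenius-fixed coefficients and so lies in F_q[t]; it is squarefree. An irreducible factor
  vanishes at some a in T, hence on the whole orbit of a, so it is divisible by the product of
  the t - y over that orbit, which again lies in F_q[t] and has degree l. Thus all irreducible
  factors have degree l. For L = 2 d! these polynomials are rigid Carmichael of order d, and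
  L l \<le> q^l - q holds for every large l.
\<close>

hide_const (open) Polynomials.degree Polynomials.lead_coeff up_ring.monom up_ring.coeff
  module.smult Coset.order Divisibility.prime Divisibility.irreducible

section \<open>Finite fields\<close>

lemma prime_CHAR_finite_field: "prime CHAR('a::{finite,field})"
  by (rule prime_CHAR_semidom[OF finite_imp_CHAR_pos]) simp

lemma card_finite_field_ge_2: "CARD('a::{finite,field}) \<ge> 2"
proof -
  have "card {0, 1 :: 'a} \<le> CARD('a)"
    by (rule card_mono) simp_all
  then show ?thesis
    by simp
qed

lemma prime_dvd_card_finite_field:
  assumes "prime r" and "r dvd CARD('a::{finite,field})"
  shows "r = CHAR('a)"
proof -
  define G :: "'a monoid" where "G = \<lparr>carrier = UNIV, monoid.mult = (+), one = 0\<rparr>"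
  interpret G: group G
    by (rule groupI) (auto simp: G_def add_ac intro: exI[of _ "- x" for x])
  have pow: "x [^]\<^bsub>G\<^esub> n = of_nat n * x" for x :: 'a and n
    by (induction n) (simp_all add: G_def algebra_simps)
  obtain m where m: "Coset.order G = r ^ 1 * m"
    using assms(2) by (auto simp: Coset.order_def G_def)
  obtain H where H: "subgroup H G" "card H = r"
    using sylow_thm[OF assms(1) G.is_group m] by (auto simp: Coset.order_def G_def)
  interpret H: group "G\<lparr>carrier := H\<rparr>"
    by (rule G.subgroup_imp_group[OF H(1)])
  have "of_nat r * x = 0" if "x \<in> H" for x
  proof -
    have "x [^]\<^bsub>G\<lparr>carrier := H\<rparr>\<^esub> r = \<one>\<^bsub>G\<lparr>carrier := H\<rparr>\<^esub>"
      using H.pow_order_eq_1[of x] that H(2) by (simp add: Coset.order_def)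
    then show ?thesis
      by (simp add: G.nat_pow_consistent[symmetric] pow) (simp add: G_def)
  qed
  moreover obtain x where "x \<in> H" "x \<noteq> 0"
  proof -
    have "\<not> H \<subseteq> {0}"
      using H(2) prime_gt_1_nat[OF assms(1)] card_mono[of "{0::'a}" H] by auto
    then show ?thesis using that by blast
  qed
  ultimately have "of_nat r = (0 :: 'a)" by auto
  then have "CHAR('a) dvd r" by (simp add: of_nat_eq_0_iff_char_dvd)
  then show ?thesis
    using assms(1) prime_CHAR_finite_field[where 'a='a] by (metis primes_dvd_imp_eq)
qed

lemma card_finite_field_eq_CHAR_power:
  obtains m where "CARD('a::{finite,field}) = CHAR('a) ^ m"
proof -
  let ?q = "CARD('a)"
  have "?q > 0" by (simp add: card_gt_0_iff)
  then have q: "?q = prod_mset (prime_factorization ?q)"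
    by simp
  have "set_mset (prime_factorization ?q) \<subseteq> {CHAR('a)}"
    using prime_dvd_card_finite_field[where 'a='a] by (auto simp: in_prime_factors_iff)
  then have "prime_factorization ?q = replicate_mset (size (prime_factorization ?q)) CHAR('a)"
    by (rule set_mset_subset_singletonD)
  then show ?thesis
    using q that by (metis prod_mset_replicate_mset)
qed

lemma power_card_finite_field:
  fixes x :: "'a::{finite,field}"
  shows "x ^ CARD('a) = x"
proof (cases "x = 0")
  case False
  let ?U = "UNIV - {0 :: 'a}"
  have "x ^ card ?U * \<Prod>?U = (\<Prod>y\<in>?U. x * y)"
    by (simp only: prod.distrib prod_constant)
  also have "\<dots> = \<Prod>?U"
    by (rule prod.reindex_bij_witness[of _ "\<lambda>y. y / x" "\<lambda>y. x * y"]) (use False in auto)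
  finally have "x ^ card ?U = 1"
    by simp
  moreover have "CARD('a) = Suc (card ?U)"
    by (simp add: card_Diff_singleton_if)
  then have "x ^ CARD('a) = x * x ^ card ?U"
    by (simp only: power_Suc)
  ultimately show ?thesis
    by simp
qed (simp add: card_gt_0_iff)

section \<open>Frobenius in prime characteristic\<close>

lemma power_CHAR_power_inj:
  fixes x y :: "'b::idom"
  assumes "prime CHAR('b)" and "n = CHAR('b) ^ m" and "x ^ n = y ^ n"
  shows "x = y"
proof -
  have "x ^ n = (x - y) ^ n + y ^ n"
    using freshmans_dream'[OF assms(1,2), of "x - y" y] by simp
  then have "(x - y) ^ n = 0"
    using assms(3) by simp
  then show ?thesis
    by simp
qed

lemma poly_power_CHAR_power:
  fixes p :: "'b::comm_ring_1 poly"
  assumes "prime CHAR('b)" and "n = CHAR('b) ^ m" and "\<And>i. coeff p i ^ n = coeff p i"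
  shows "poly p (x ^ n) = poly p x ^ n"
proof -
  have "poly p x ^ n = (\<Sum>i\<le>degree p. (coeff p i * x ^ i) ^ n)"
    by (simp add: poly_altdef freshmans_dream_sum'[OF assms(1,2)])
  also have "\<dots> = (\<Sum>i\<le>degree p. coeff p i * (x ^ n) ^ i)"
    by (simp add: power_mult_distrib assms(3) mult.commute flip: power_mult)
  also have "\<dots> = poly p (x ^ n)"
    by (simp add: poly_altdef)
  finally show ?thesis ..
qed

lemma additive_hom_sum:
  assumes "f 0 = 0" and "\<And>a b. f (a + b) = f a + f b"
  shows "f (sum g A) = (\<Sum>x\<in>A. f (g x))"
  by (induction A rule: infinite_finite_induct) (simp_all add: assms)

lemma map_poly_mult_hom:
  fixes f :: "'b::comm_semiring_1 \<Rightarrow> 'c::comm_semiring_1"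
  assumes "f 0 = 0" and "\<And>a b. f (a + b) = f a + f b" and "\<And>a b. f (a * b) = f a * f b"
  shows "map_poly f (p * q) = map_poly f p * map_poly f q"
  by (rule poly_eqI) (simp add: coeff_map_poly coeff_mult additive_hom_sum[of f, OF assms(1,2)] assms)

lemma map_poly_prod_hom:
  fixes f :: "'b::comm_semiring_1 \<Rightarrow> 'c::comm_semiring_1"
  assumes "f 0 = 0" and "f 1 = 1" and "\<And>a b. f (a + b) = f a + f b"
    and "\<And>a b. f (a * b) = f a * f b"
  shows "map_poly f (\<Prod>x\<in>A. p x) = (\<Prod>x\<in>A. map_poly f (p x))"
  by (induction A rule: infinite_finite_induct) (simp_all add: assms map_poly_mult_hom)

lemma coeff_prod_linear_power_CHAR_power:
  fixes T :: "'b::field set"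
  assumes "prime CHAR('b)" and n: "n = CHAR('b) ^ m" and "finite T" and "(\<lambda>y. y ^ n) ` T \<subseteq> T"
  shows "coeff (\<Prod>y\<in>T. [:-y, 1:]) i ^ n = coeff (\<Prod>y\<in>T. [:-y, 1:]) i"
proof -
  let ?frob = "\<lambda>y::'b. y ^ n"
  have "n > 0"
    using n prime_gt_0_nat[OF assms(1)] by simp
  have add: "?frob (a + b) = ?frob a + ?frob b" for a b
    by (rule freshmans_dream'[OF assms(1) n])
  have uminus: "?frob (- a) = - ?frob a" for a
    using add[of a "- a"] \<open>n > 0\<close> by (simp add: zero_power eq_neg_iff_add_eq_0 add.commute)
  have inj: "inj_on ?frob T"
    by (rule inj_onI) (rule power_CHAR_power_inj[OF assms(1) n])
  have perm: "?frob ` T = T"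
    by (rule endo_inj_surj[OF assms(3,4) inj])
  have "map_poly ?frob (\<Prod>y\<in>T. [:-y, 1:]) = (\<Prod>y\<in>T. map_poly ?frob [:-y, 1:])"
    by (rule map_poly_prod_hom) (use \<open>n > 0\<close> add in \<open>simp_all add: power_mult_distrib\<close>)
  also have "\<dots> = (\<Prod>y\<in>T. [:- ?frob y, 1:])"
    using \<open>n > 0\<close> by (simp add: map_poly_pCons uminus)
  also have "\<dots> = (\<Prod>y\<in>T. [:-y, 1:])"
    using prod.reindex[OF inj, of "\<lambda>y. [:-y, 1:]"] perm by simp
  finally show ?thesis
    using \<open>n > 0\<close> by (metis coeff_map_poly zero_power)
qed

section \<open>Products of linear factors\<close>

lemma prod_linear_dvd:
  fixes p :: "'b::idom poly"
  assumes "finite A" and "\<And>y. y \<in> A \<Longrightarrow> poly p y = 0"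
  shows "(\<Prod>y\<in>A. [:-y, 1:]) dvd p"
  using assms
proof (induction A arbitrary: p rule: finite_induct)
  case (insert x A)
  then obtain r where r: "p = [:-x, 1:] * r"
    by (metis insertI1 dvdE poly_eq_0_iff_dvd)
  have "poly r y = 0" if "y \<in> A" for y
    using insert.prems[of y] that insert.hyps(2) r by auto
  then have "(\<Prod>y\<in>A. [:-y, 1:]) dvd r"
    by (rule insert.IH)
  then show ?case
    using insert.hyps r by (simp add: mult_dvd_mono del: mult_pCons_left)
qed simp

lemma squarefree_prod_linear:
  fixes T :: "'b::alg_closed_field set"
  assumes "finite T"
  shows "squarefree (\<Prod>y\<in>T. [:-y, 1:])"
proof (rule squarefreeI)
  fix r assume r2: "r ^ 2 dvd (\<Prod>y\<in>T. [:-y, 1:])"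
  show "is_unit r"
  proof (rule ccontr)
    assume "\<not> is_unit r"
    moreover have "r \<noteq> 0"
      using r2 assms by (auto simp: power_0_left)
    ultimately obtain a where "poly r a = 0"
      using alg_closed_imp_poly_has_root is_unit_iff_degree by blast
    then have lin: "[:-a, 1:] dvd r"
      by (simp add: poly_eq_0_iff_dvd)
    from lin lin have "[:-a, 1:] * [:-a, 1:] dvd r * r"
      by (rule mult_dvd_mono)
    then have sq: "[:-a, 1:] * [:-a, 1:] dvd (\<Prod>y\<in>T. [:-y, 1:])"
      by (rule dvd_trans[OF _ r2[unfolded power2_eq_square]])
    then have "[:-a, 1:] dvd (\<Prod>y\<in>T. [:-y, 1:])"
      by (rule dvd_mult_left)
    then have "poly (\<Prod>y\<in>T. [:-y, 1:]) a = 0"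
      by (simp only: poly_eq_0_iff_dvd)
    then have "a \<in> T"
      using assms by (auto simp: poly_prod)
    then have "(\<Prod>y\<in>T. [:-y, 1:]) = [:-a, 1:] * (\<Prod>y\<in>T - {a}. [:-y, 1:])"
      by (rule prod.remove[OF assms])
    with sq have "[:-a, 1:] * [:-a, 1:] dvd [:-a, 1:] * (\<Prod>y\<in>T - {a}. [:-y, 1::'b:])"
      by (simp only:)
    then have "[:-a, 1:] dvd (\<Prod>y\<in>T - {a}. [:-y, 1::'b:])"
      by (subst (asm) dvd_mult_cancel_left) simp_all
    then have "poly (\<Prod>y\<in>T - {a}. [:-y, 1::'b:]) a = 0"
      by (simp add: poly_eq_0_iff_dvd)
    then show False
      using assms by (auto simp: poly_prod)
  qed
qed

lemma card_roots_eq_degree: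
  fixes p :: "'b::alg_closed_field poly"
  assumes p0: "p \<noteq> 0" and sep: "\<And>x. poly p x = 0 \<Longrightarrow> poly (pderiv p) x \<noteq> 0"
  shows "card {x. poly p x = 0} = degree p"
proof -
  obtain A where A: "size A = degree p" "p = smult (lead_coeff p) (\<Prod>x\<in>#A. [:-x, 1:])"
    using alg_closed_imp_factorization[OF p0] by blast
  have "proots (\<Prod>x\<in>#A. [:-x, 1:]) = A"
  proof (induction A)
    case (add x A)
    have "(\<Prod>x\<in>#A. [:-x, 1::'b:]) \<noteq> 0"
      by auto
    then show ?case
      using add.IH by (simp add: proots_mult del: mult_pCons_left)
  qed simp
  then have roots: "proots p = A"
    using p0 by (subst A(2)) simp
  have simple: "order x p \<le> 1" for x
  proof (rule ccontr)
    assume "\<not> order x p \<le> 1"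
    then have "[:-x, 1:] ^ 2 dvd p"
      by (simp add: order_divides)
    then obtain r where p: "p = [:-x, 1:] * ([:-x, 1:] * r)"
      by (metis dvdE power2_eq_square mult.assoc)
    then have "poly p x = 0"
      by simp
    moreover have "poly (pderiv p) x = 0"
      unfolding p pderiv_mult by (simp del: mult_pCons_left)
    ultimately show False
      using sep by blast
  qed
  have "proots p = mset_set {x. poly p x = 0}"
  proof (rule multiset_eqI)
    show "count (proots p) x = count (mset_set {x. poly p x = 0}) x" for x
      using simple[of x] p0 poly_roots_finite[OF p0]
      by (cases "poly p x = 0") (auto simp: order_root)
  qed
  then show ?thesis
    using A(1) roots by (metis size_mset_set)
qed

lemma card_fixed_points_power:
  assumes "of_nat n = (0 :: 'b::alg_closed_field)" and "n \<ge> 2"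
  shows "card {x :: 'b. x ^ n = x} = n"
proof -
  define p :: "'b poly" where "p = monom 1 n - [:0, 1:]"
  have "degree p = n"
    using assms(2) unfolding p_def diff_conv_add_uminus
    by (subst degree_add_eq_left) (simp_all add: degree_monom_eq)
  moreover have "p \<noteq> 0"
    using calculation assms(2) by auto
  moreover have "pderiv p = [:-1:]"
    using assms(1) by (simp add: p_def pderiv_diff pderiv_monom pderiv_pCons)
  moreover have "{x. poly p x = 0} = {x. x ^ n = x}"
    by (simp add: p_def poly_monom)
  ultimately show ?thesis
    using card_roots_eq_degree[of p] by simp
qed

section \<open>Points of prime period\<close>

definition iterates :: "('b \<Rightarrow> 'b) \<Rightarrow> nat \<Rightarrow> 'b \<Rightarrow> 'b set" where
  "iterates f l x = (\<lambda>k. (f ^^ k) x) ` {..<l}"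

lemma funpow_in_invariant:
  assumes "f ` T \<subseteq> T" and "x \<in> T"
  shows "(f ^^ k) x \<in> T"
  using assms by (induction k) auto

lemma iterates_subset_invariant:
  assumes "f ` T \<subseteq> T" and "x \<in> T"
  shows "iterates f l x \<subseteq> T"
  using funpow_in_invariant[OF assms] by (auto simp: iterates_def)

lemma iterates_invariant:
  assumes "(f ^^ l) x = x"
  shows "f ` iterates f l x \<subseteq> iterates f l x"
proof
  fix z assume "z \<in> f ` iterates f l x"
  then obtain k where k: "k < l" "z = (f ^^ Suc k) x"
    by (auto simp: iterates_def)
  show "z \<in> iterates f l x"
  proof (cases "Suc k < l")
    case True
    then show ?thesis using k by (auto simp: iterates_def intro!: image_eqI[of _ _ "Suc k"])
  next
    case False
    then have "Suc k = l"
      using k(1) by simp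
    then have "z = x"
      using k(2) assms by metis
    with k show ?thesis by (auto simp: iterates_def intro: image_eqI[of _ _ 0])
  qed
qed

lemma in_iterates_return:
  assumes "(f ^^ l) x = x" and "y \<in> iterates f l x"
  obtains j where "x = (f ^^ j) y"
proof -
  obtain k where "k < l" "y = (f ^^ k) x"
    using assms(2) by (auto simp: iterates_def)
  then have "(f ^^ (l - k)) y = (f ^^ (l - k + k)) x"
    by (simp only: funpow_add comp_apply)
  with \<open>k < l\<close> have "(f ^^ (l - k)) y = x"
    using assms(1) by simp
  then show ?thesis using that by metis
qed

lemma fixed_point_of_prime_period:
  assumes "prime l" and "(f ^^ l) x = x" and "(f ^^ d) x = x" and "0 < d" and "d < l"
  shows "f x = x"
proof -
  have periodic: "(f ^^ (n * k)) x = x" if "(f ^^ n) x = x" for n k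
    using that by (induction k) (simp_all add: funpow_add)
  have "coprime d l"
    using assms(1,4,5) by (metis coprime_commute nat_dvd_not_less prime_imp_coprime)
  then obtain a b where "d * a = l * b + 1"
    using bezout_nat[of d l] assms(4) by auto
  then have "(f ^^ (d * a)) x = f ((f ^^ (l * b)) x)"
    by (simp add: funpow_add)
  then show ?thesis
    using periodic[OF assms(3)] periodic[OF assms(2)] by metis
qed

lemma card_iterates_prime:
  assumes l: "prime l" and per: "(f ^^ l) x = x" and "f x \<noteq> x"
  shows "card (iterates f l x) = l"
proof -
  have "inj_on (\<lambda>k. (f ^^ k) x) {..<l}"
  proof (rule linorder_inj_onI')
    fix i j assume "i \<in> {..<l}" "j \<in> {..<l}" "i < j"
    show "(f ^^ i) x \<noteq> (f ^^ j) x"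
    proof
      assume eq: "(f ^^ i) x = (f ^^ j) x"
      have "(f ^^ (l - j + i)) x = (f ^^ (l - j)) ((f ^^ j) x)"
        using eq by (simp add: funpow_add)
      also have "\<dots> = (f ^^ (l - j + j)) x"
        by (simp only: funpow_add comp_apply)
      also have "\<dots> = x"
        using \<open>j \<in> {..<l}\<close> per by simp
      finally have "(f ^^ (l - j + i)) x = x" .
      moreover have "0 < l - j + i" and "l - j + i < l"
        using \<open>i < j\<close> \<open>j \<in> {..<l}\<close> by auto
      ultimately have "f x = x"
        by (rule fixed_point_of_prime_period[OF l per])
      with \<open>f x \<noteq> x\<close> show False
        by contradiction
    qed
  qed
  then show ?thesis
    by (simp add: iterates_def card_image)
qed

lemma exists_invariant_subset_of_card:
  assumes l: "prime l" and "finite S" and inv: "f ` S \<subseteq> S"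
    and per: "\<And>x. x \<in> S \<Longrightarrow> (f ^^ l) x = x \<and> f x \<noteq> x" and "k * l \<le> card S"
  shows "\<exists>T \<subseteq> S. f ` T \<subseteq> T \<and> card T = k * l"
  using assms(5)
proof (induction k)
  case 0
  show ?case
    by (intro exI[of _ "{}"]) simp
next
  case (Suc k)
  then have "k * l \<le> card S"
    by simp
  then obtain T where T: "T \<subseteq> S" "f ` T \<subseteq> T" "card T = k * l"
    using Suc.IH by blast
  have "card T < card S"
    using Suc.prems T(3) prime_gt_0_nat[OF l] by simp
  then have "T \<noteq> S"
    by auto
  then obtain x where x: "x \<in> S" "x \<notin> T"
    using T(1) by blast
  let ?O = "iterates f l x"
  have "?O \<inter> T = {}"
  proof (rule ccontr)
    assume "?O \<inter> T \<noteq> {}"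
    then obtain y where "y \<in> ?O" "y \<in> T" by blast
    then obtain j where "x = (f ^^ j) y"
      using in_iterates_return per[OF x(1)] by metis
    then show False
      using funpow_in_invariant[OF T(2) \<open>y \<in> T\<close>] x(2) by simp
  qed
  moreover have "finite T"
    using T(1) \<open>finite S\<close> finite_subset by blast
  ultimately have "card (T \<union> ?O) = card T + card ?O"
    by (intro card_Un_disjoint) (auto simp: iterates_def)
  also have "\<dots> = Suc k * l"
    using card_iterates_prime[OF l] per[OF x(1)] T(3) by auto
  finally have "card (T \<union> ?O) = Suc k * l" .
  moreover have "T \<union> ?O \<subseteq> S"
    using T(1) iterates_subset_invariant[OF inv x(1)] by blast
  moreover have "f ` (T \<union> ?O) \<subseteq> T \<union> ?O"
    using T(2) iterates_invariant[OF conjunct1[OF per[OF x(1)]]] by blast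
  ultimately show ?case
    by (intro exI[of _ "T \<union> ?O"]) simp
qed

section \<open>The algebraic closure of a finite field\<close>

definition frob :: "'a::{finite,field} alg_closure \<Rightarrow> 'a alg_closure" where
  "frob y = y ^ CARD('a)"

lemma frob_0 [simp]: "frob 0 = (0 :: 'a::{finite,field} alg_closure)"
  by (simp add: frob_def card_gt_0_iff)

lemma funpow_frob:
  fixes y :: "'a::{finite,field} alg_closure"
  shows "(frob ^^ k) y = y ^ (CARD('a) ^ k)"
  by (induction k) (simp_all add: frob_def mult.commute flip: power_mult)

lemma prime_CHAR_alg_closure: "prime CHAR('a::{finite,field} alg_closure)"
  by (simp add: prime_CHAR_finite_field)

lemma CARD_power_eq_CHAR_power:
  obtains m where "CARD('a::{finite,field}) ^ k = CHAR('a alg_closure) ^ m"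
  using card_finite_field_eq_CHAR_power[where 'a='a] by (metis CHAR_alg_closure power_mult)

lemma frob_inj:
  assumes "frob x = frob (y :: 'a::{finite,field} alg_closure)"
  shows "x = y"
proof -
  obtain m where m: "CARD('a) = CHAR('a alg_closure) ^ m"
    using CARD_power_eq_CHAR_power[where k=1] by auto
  show ?thesis
    using assms unfolding frob_def by (rule power_CHAR_power_inj[OF prime_CHAR_alg_closure m])
qed

lemma to_ac_power_CARD_power: "to_ac (c :: 'a::{finite,field}) ^ (CARD('a) ^ k) = to_ac c"
proof -
  have "c ^ (CARD('a) ^ k) = c"
    by (induction k) (simp_all add: power_card_finite_field power_mult)
  then show ?thesis
    by (metis to_ac_power)
qed

lemma card_fixed_points_CARD_power:
  assumes "k \<ge> 1"
  shows "card {y :: 'a::{finite,field} alg_closure. y ^ (CARD('a) ^ k) = y} = CARD('a) ^ k"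
proof (rule card_fixed_points_power)
  obtain m where m: "CARD('a) ^ k = CHAR('a alg_closure) ^ m"
    by (rule CARD_power_eq_CHAR_power)
  have "CARD('a) ^ 1 \<le> CARD('a) ^ k"
    using assms card_finite_field_ge_2[where 'a='a] by (intro power_increasing) auto
  then show "CARD('a) ^ k \<ge> 2"
    using card_finite_field_ge_2[where 'a='a] by simp
  with m have "m \<noteq> 0"
    by (cases m) auto
  with m show "of_nat (CARD('a) ^ k) = (0 :: 'a alg_closure)"
    by (simp add: of_nat_eq_0_iff_char_dvd)
qed

lemma range_to_ac_eq_fixed_points: "range (to_ac :: 'a::{finite,field} \<Rightarrow> _) = {y. frob y = y}"
proof (rule card_seteq)
  have "card {y :: 'a alg_closure. frob y = y} = CARD('a)"
    using card_fixed_points_CARD_power[of 1, where 'a='a] by (simp add: frob_def)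
  then show "finite {y :: 'a alg_closure. frob y = y}"
    using card_finite_field_ge_2[where 'a='a] by (intro card_ge_0_finite) simp
  show "range to_ac \<subseteq> {y :: 'a alg_closure. frob y = y}"
    using to_ac_power_CARD_power[where k=1] by (auto simp: frob_def)
  show "card {y :: 'a alg_closure. frob y = y} \<le> card (range (to_ac :: 'a \<Rightarrow> _))"
    using \<open>card {y. frob y = y} = CARD('a)\<close> by (simp add: card_image inj_to_ac)
qed

lemma map_poly_to_ac_mult: "map_poly to_ac (p * q) = map_poly to_ac p * map_poly to_ac (q :: 'a::field poly)"
  by (rule map_poly_mult_hom) simp_all

lemma map_poly_to_ac_add: "map_poly to_ac (p + q) = map_poly to_ac p + map_poly to_ac (q :: 'a::field poly)"
  by (rule poly_eqI) (simp add: coeff_map_poly)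

lemma degree_map_poly_to_ac [simp]: "degree (map_poly to_ac (p :: 'a::field poly)) = degree p"
  by (rule degree_map_poly) simp

lemma map_poly_to_ac_eq_0_iff [simp]: "map_poly to_ac (p :: 'a::field poly) = 0 \<longleftrightarrow> p = 0"
  by (simp add: map_poly_eq_0_iff)

lemma map_poly_to_ac_dvd_iff: "map_poly to_ac p dvd map_poly to_ac q \<longleftrightarrow> p dvd (q :: 'a::field poly)"
proof
  assume dvd: "map_poly to_ac p dvd map_poly to_ac q"
  show "p dvd q"
  proof (cases "p = 0")
    case False
    have "map_poly to_ac q = map_poly to_ac (q div p) * map_poly to_ac p + map_poly to_ac (q mod p)"
      by (metis div_mult_mod_eq map_poly_to_ac_mult map_poly_to_ac_add)
    then have "map_poly to_ac p dvd map_poly to_ac (q mod p)"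
      using dvd by (metis dvd_add_right_iff dvd_triv_right)
    moreover have "degree (q mod p) < degree p \<or> q mod p = 0"
      using False degree_mod_less' by blast
    ultimately have "q mod p = 0"
      by (metis degree_map_poly_to_ac dvd_imp_degree_le map_poly_to_ac_eq_0_iff not_le)
    then show ?thesis
      by (rule mod_0_imp_dvd)
  qed (use dvd in simp)
qed (metis dvdE dvdI map_poly_to_ac_mult)

lemma squarefree_map_poly_to_acD:
  assumes "squarefree (map_poly to_ac (g :: 'a::field poly))"
  shows "squarefree g"
proof (rule squarefreeI)
  fix r assume "r ^ 2 dvd g"
  then have "map_poly to_ac r ^ 2 dvd map_poly to_ac g"
    by (metis map_poly_to_ac_dvd_iff map_poly_to_ac_mult power2_eq_square)
  then have "is_unit (map_poly to_ac r)"
    using squarefreeD[OF assms] by blast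
  moreover from this have "r \<noteq> 0"
    by auto
  ultimately show "is_unit r"
    by (simp add: is_unit_iff_degree)
qed

lemma poly_map_poly_to_ac_frob:
  "poly (map_poly to_ac P) (frob y) = frob (poly (map_poly to_ac (P :: 'a::{finite,field} poly)) y)"
proof -
  obtain m where m: "CARD('a) = CHAR('a alg_closure) ^ m"
    using CARD_power_eq_CHAR_power[where k=1] by auto
  show ?thesis
    unfolding frob_def
    by (rule poly_power_CHAR_power[OF prime_CHAR_alg_closure m])
      (use to_ac_power_CARD_power[where k=1] in \<open>simp add: coeff_map_poly\<close>)
qed

lemma descent_prod_linear:
  fixes T :: "'a::{finite,field} alg_closure set"
  assumes "finite T" and "frob ` T \<subseteq> T"
  obtains g :: "'a poly" where "map_poly to_ac g = (\<Prod>y\<in>T. [:-y, 1:])"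
proof
  let ?h = "\<Prod>y\<in>T. [:-y, 1:]"
  obtain m where m: "CARD('a) = CHAR('a alg_closure) ^ m"
    using CARD_power_eq_CHAR_power[where k=1] by auto
  have "frob (coeff ?h i) = coeff ?h i" for i
    unfolding frob_def
    by (rule coeff_prod_linear_power_CHAR_power[OF prime_CHAR_alg_closure m assms(1)])
      (use assms(2) in \<open>auto simp: frob_def\<close>)
  then have "coeff ?h i \<in> range to_ac" for i
    by (simp add: range_to_ac_eq_fixed_points)
  then show "map_poly to_ac (map_poly of_ac ?h) = ?h"
    by (intro poly_eqI) (simp add: coeff_map_poly to_ac_of_ac)
qed

section \<open>Polynomials whose irreducible factors all have degree l\<close>

text \<open>The elements of F_{q^l} outside F_q.\<close>

definition new_elems :: "nat \<Rightarrow> 'a::{finite,field} alg_closure set" where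
  "new_elems l = {y. (frob ^^ l) y = y \<and> frob y \<noteq> y}"

lemma new_elems_eq:
  "new_elems l = {y. y ^ (CARD('a) ^ l) = y} - range (to_ac :: 'a::{finite,field} \<Rightarrow> _)"
  by (auto simp: new_elems_def range_to_ac_eq_fixed_points funpow_frob)

lemma
  assumes "l \<ge> 1"
  shows finite_new_elems: "finite (new_elems l :: 'a::{finite,field} alg_closure set)"
    and card_new_elems: "card (new_elems l :: 'a alg_closure set) = CARD('a) ^ l - CARD('a)"
proof -
  let ?R = "{y :: 'a alg_closure. y ^ (CARD('a) ^ l) = y}"
  have card_R: "card ?R = CARD('a) ^ l"
    by (rule card_fixed_points_CARD_power[OF assms])
  then have "finite ?R"
    using card_finite_field_ge_2[where 'a='a] by (intro card_ge_0_finite) simp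
  moreover have "range to_ac \<subseteq> ?R"
    using to_ac_power_CARD_power by auto
  ultimately show "finite (new_elems l :: 'a alg_closure set)"
    and "card (new_elems l :: 'a alg_closure set) = CARD('a) ^ l - CARD('a)"
    using card_R by (simp_all add: new_elems_eq card_Diff_subset card_image inj_to_ac)
qed

lemma frob_new_elems: "frob ` new_elems l \<subseteq> (new_elems l :: 'a::{finite,field} alg_closure set)"
proof
  fix z :: "'a alg_closure" assume "z \<in> frob ` new_elems l"
  then obtain y where y: "y \<in> new_elems l" "z = frob y"
    by blast
  have "(frob ^^ l) (frob y) = frob ((frob ^^ l) y)"
    by (simp only: funpow_swap1)
  then have "(frob ^^ l) z = z"
    using y by (simp add: new_elems_def)
  moreover have "frob z \<noteq> z"
    using y frob_inj by (auto simp: new_elems_def)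
  ultimately show "z \<in> new_elems l"
    by (simp add: new_elems_def)
qed

lemma degree_eq_of_dvd_irreducible:
  fixes P Q :: "'b::field poly"
  assumes "irreducible P" and "Q dvd P" and "degree Q > 0"
  shows "degree P = degree Q"
proof -
  have "P \<noteq> 0" and "Q \<noteq> 0"
    using assms by auto
  then have "\<not> is_unit Q"
    using assms(3) by (simp add: is_unit_iff_degree)
  then have "P dvd Q"
    using irreducibleD'[OF assms(1,2)] by blast
  then show ?thesis
    using assms(2) \<open>P \<noteq> 0\<close> \<open>Q \<noteq> 0\<close> by (simp add: dvd_imp_degree_le le_antisym)
qed

lemma divisor_of_degree_l_if_root_in_new_elems:
  fixes P :: "'a::{finite,field} poly"
  assumes l: "prime l" and a: "a \<in> new_elems l" and root: "poly (map_poly to_ac P) a = 0"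
  obtains Q where "degree Q = l" and "Q dvd P"
proof -
  have per: "(frob ^^ l) a = a" "frob a \<noteq> a"
    using a by (auto simp: new_elems_def)
  let ?O = "iterates frob l a"
  have "finite ?O"
    by (simp add: iterates_def)
  obtain Q where Q: "map_poly to_ac Q = (\<Prod>y\<in>?O. [:-y, 1:])"
    using descent_prod_linear[OF \<open>finite ?O\<close> iterates_invariant[OF per(1)]] .
  have "degree Q = l"
    using degree_map_poly_to_ac[of Q] Q \<open>finite ?O\<close> card_iterates_prime[OF l per]
    by (simp add: degree_prod_sum_eq)
  moreover have "frob ` {y. poly (map_poly to_ac P) y = 0} \<subseteq> {y. poly (map_poly to_ac P) y = 0}"
    by (auto simp: poly_map_poly_to_ac_frob)
  then have "?O \<subseteq> {y. poly (map_poly to_ac P) y = 0}"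
    using root by (intro iterates_subset_invariant) auto
  then have "map_poly to_ac Q dvd map_poly to_ac P"
    unfolding Q using \<open>finite ?O\<close> by (intro prod_linear_dvd) auto
  then have "Q dvd P"
    by (simp add: map_poly_to_ac_dvd_iff)
  ultimately show ?thesis
    using that by blast
qed

lemma degree_irreducible_dvd_prod_new_elems:
  fixes g P :: "'a::{finite,field} poly"
  assumes l: "prime l" and T: "T \<subseteq> new_elems l"
    and g: "map_poly to_ac g = (\<Prod>y\<in>T. [:-y, 1:])"
    and P: "irreducible P" "P dvd g"
  shows "degree P = l"
proof -
  have "P \<noteq> 0" and "\<not> is_unit P"
    using P(1) by (auto simp: Factorial_Ring.irreducible_def)
  then obtain a where a: "poly (map_poly to_ac P) a = 0"
    using alg_closed_imp_poly_has_root[of "map_poly to_ac P"] by (auto simp: is_unit_iff_degree)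
  have "finite T"
    using T finite_new_elems[of l] prime_ge_1_nat[OF l] finite_subset by blast
  have "map_poly to_ac P dvd (\<Prod>y\<in>T. [:-y, 1:])"
    using P(2) unfolding g[symmetric] map_poly_to_ac_dvd_iff .
  with a have "poly (\<Prod>y\<in>T. [:-y, 1:]) a = 0"
    by (meson dvd_trans poly_eq_0_iff_dvd)
  then have "a \<in> new_elems l"
    using \<open>finite T\<close> T by (auto simp: poly_prod)
  then obtain Q where "degree Q = l" "Q dvd P"
    using divisor_of_degree_l_if_root_in_new_elems[OF l _ a] by blast
  then show ?thesis
    using degree_eq_of_dvd_irreducible[OF P(1)] prime_gt_0_nat[OF l] by simp
qed

lemma exists_squarefree_equal_degree_factors:
  assumes l: "prime l" and big: "L * l + CARD('a) \<le> CARD('a) ^ l"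
  obtains g :: "'a::{finite,field} poly"
  where "lead_coeff g = 1" "degree g = L * l" "squarefree g"
    "\<And>P. irreducible P \<Longrightarrow> P dvd g \<Longrightarrow> degree P = l"
proof -
  have "l \<ge> 1"
    using prime_ge_1_nat[OF l] .
  then have room: "L * l \<le> card (new_elems l :: 'a alg_closure set)"
    using big by (simp add: card_new_elems)
  have per: "(frob ^^ l) y = y \<and> frob y \<noteq> y" if "y \<in> new_elems l" for y :: "'a alg_closure"
    using that by (simp add: new_elems_def)
  obtain T :: "'a alg_closure set"
    where T: "T \<subseteq> new_elems l" "frob ` T \<subseteq> T" "card T = L * l"
    using exists_invariant_subset_of_card[OF l finite_new_elems[OF \<open>l \<ge> 1\<close>] frob_new_elems per room]
    by blast
  have "finite T"
    using T(1) finite_new_elems[OF \<open>l \<ge> 1\<close>] finite_subset by blast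
  obtain g :: "'a poly" where g: "map_poly to_ac g = (\<Prod>y\<in>T. [:-y, 1:])"
    using descent_prod_linear[OF \<open>finite T\<close> T(2)] .
  show ?thesis
  proof
    show "degree g = L * l"
      using degree_map_poly_to_ac[of g] g \<open>finite T\<close> T(3) by (simp add: degree_prod_sum_eq)
    have "to_ac (lead_coeff g) = lead_coeff (\<Prod>y\<in>T. [:-y, 1::'a alg_closure:])"
      by (metis g coeff_map_poly degree_map_poly_to_ac to_ac_0)
    then show "lead_coeff g = 1"
      by (simp add: lead_coeff_prod)
    show "squarefree g"
      using squarefree_prod_linear[OF \<open>finite T\<close>] g by (metis squarefree_map_poly_to_acD)
    show "degree P = l" if "irreducible P" "P dvd g" for P
      using degree_irreducible_dvd_prod_new_elems[OF l T(1) g that] .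
  qed
qed

section \<open>Rigid Carmichael polynomials\<close>

lemma rigid_carmichael_if_equal_degree_factors:
  fixes g :: "'a::field poly"
  assumes "squarefree g" and deg: "degree g = k * l" and "k \<ge> 2" "l > 0" and "fact d dvd k"
    and factors: "\<And>P. irreducible P \<Longrightarrow> P dvd g \<Longrightarrow> degree P = l"
  shows "rigid_carmichael d g"
  unfolding rigid_carmichael_def
proof (intro conjI allI impI ballI)
  show "g \<noteq> 0"
    using assms(1) by auto
  have "degree g > l"
    using deg assms(3,4) by simp
  with \<open>g \<noteq> 0\<close> show "\<not> is_unit g"
    by (simp add: is_unit_iff_degree)
  show "\<not> irreducible g"
    using factors[of g] \<open>degree g > l\<close> by auto
  show "squarefree g"
    by fact
  fix P i assume "irreducible P \<and> P dvd g" "i \<in> {1..d}"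
  then have "degree P = l" and "i dvd k"
    using factors dvd_trans[OF dvd_fact assms(5), of i] by auto
  then have "i * degree P dvd k * l"
    by (simp add: mult_dvd_mono)
  then show "i * degree P dvd d * degree g"
    unfolding deg by (rule dvd_mult)
qed

lemma square_le_two_power: "n \<ge> 4 \<Longrightarrow> n * n \<le> (2::nat) ^ n"
proof (induction n rule: dec_induct)
  case (step n)
  have "4 * n \<le> n * n"
    using step.hyps(1) by (rule mult_le_mono1)
  moreover have "Suc n * Suc n = n * n + 2 * n + 1"
    by simp
  ultimately have "Suc n * Suc n \<le> 2 * (n * n)"
    using step.hyps(1) by linarith
  then show ?case
    using step.IH by simp
qed simp

lemma exists_prime_gt_with_power_bound:
  assumes "q \<ge> (2::nat)"
  obtains l where "prime l" "l > N" "L * l + q \<le> q ^ l"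
proof -
  obtain l where l: "prime l" "l > N + L + q + 4"
    using bigger_prime by blast
  have "L * l + q \<le> (L + q) * l"
    using l(2) by (simp add: algebra_simps)
  also have "\<dots> \<le> l * l"
    using l(2) by simp
  also have "\<dots> \<le> 2 ^ l"
    using l(2) by (intro square_le_two_power) simp
  also have "\<dots> \<le> q ^ l"
    using assms by (intro power_mono) simp_all
  finally show ?thesis
    using that l by simp
qed

theorem theorem4p8:
  fixes d :: nat
  assumes "d \<ge> 1"
  shows "infinite {g :: 'a::{finite,field} poly. lead_coeff g = 1 \<and> rigid_carmichael d g}"
  \<comment> \<open>The argument also works for d = 0.\<close>
proof
  let ?G = "{g :: 'a poly. lead_coeff g = 1 \<and> rigid_carmichael d g}"
  assume "finite ?G"
  then obtain N where N: "\<And>g. g \<in> ?G \<Longrightarrow> degree g \<le> N"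
    using finite_nat_set_iff_bounded_le[of "degree ` ?G"] by auto
  define L :: nat where "L = 2 * fact d"
  obtain l where l: "prime l" "l > N" "L * l + CARD('a) \<le> CARD('a) ^ l"
    using exists_prime_gt_with_power_bound[OF card_finite_field_ge_2] by blast
  obtain g :: "'a poly" where g: "lead_coeff g = 1" "degree g = L * l" "squarefree g"
    "\<And>P. irreducible P \<Longrightarrow> P dvd g \<Longrightarrow> degree P = l"
    using exists_squarefree_equal_degree_factors[OF l(1,3)] by blast
  have "L \<ge> 2"
    using fact_ge_1[of d] by (simp add: L_def)
  then have "rigid_carmichael d g"
    using g prime_gt_0_nat[OF l(1)] by (intro rigid_carmichael_if_equal_degree_factors) (auto simp: L_def)
  then have "degree g \<le> N"
    using N g(1) by blast
  moreover have "l \<le> L * l"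
    using \<open>L \<ge> 2\<close> by simp
  then have "degree g > N"
    using g(2) l(2) by linarith
  ultimately show False
    by simp
qed

end
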